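(* Let $v,u$ be integrable functions on $[0,\infty)$ and let $z_1,z_2,\gamma_1,\gamma_2$ be integrable functions on $[0,\infty)$ such that $$z_1(x)\le v(x)\le z_2(x)\quad\text{and}\quad \gamma_1(x)\le u(x)\le\gamma_2(x)\quad\text{for all }x\in[0,\infty).$$ Then for all $x>0$, $\alpha>0$, $\delta>0$, $\rho>0$ and $\beta,\lambda,\eta,k\in\mathbb{R}$, writing $A f=\,{}^{\rho}\mathcal{J}^{\alpha,\beta}_{\eta,k}f(x)$ and $D f=\,{}^{\rho}\mathcal{J}^{\delta,\lambda}_{\eta,k}f(x)$, the following hold: (a) $Du\,Az_2+D\gamma_1\,Av\ \ge\ D\gamma_1\,Az_2+Du\,Av$; (b) $Dz_1\,Au+A\gamma_2\,Dv\ \ge\ Dz_1\,A\gamma_2+Dv\,Au$; (c) $Az_2\,D\gamma_2+Av\,Du\ \ge\ Az_2\,Du+D\gamma_2\,Av$; (d) $Az_1\,D\gamma_1+Av\,Du\ \ge\ Az_1\,Du+D\gamma_1\,Av$.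
   Context: For a function $f$ on $[0,\infty)$, $x>0$, $\alpha>0$, $\rho>0$ and $\beta,\eta,k\in\mathbb{R}$, the generalized Katugampola fractional integral is $${}^{\rho}\mathcal{J}^{\alpha,\beta}_{\eta,k}f(x)=\frac{\rho^{1-\beta}x^{k}}{\Gamma(\alpha)}\int_0^x\frac{\tau^{\rho(\eta+1)-1}}{(x^\rho-\tau^\rho)^{1-\alpha}}f(\tau)\,d\tau,$$ defined whenever the integral exists; all such integrals appearing are assumed to exist. *)

theory Defs
  imports "HOL-Analysis.Analysis"
begin

definition katu_kernel :: "real \<Rightarrow> real \<Rightarrow> real \<Rightarrow> real \<Rightarrow> real \<Rightarrow> real" where
  "katu_kernel \<rho> \<alpha> \<eta> x \<tau> =
     \<tau> powr (\<rho> * (\<eta> + 1) - 1) / (x powr \<rho> - \<tau> powr \<rho>) powr (1 - \<alpha>)"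

definition katu_integrable :: "real \<Rightarrow> real \<Rightarrow> real \<Rightarrow> (real \<Rightarrow> real) \<Rightarrow> real \<Rightarrow> bool" where
  "katu_integrable \<rho> \<alpha> \<eta> f x \<longleftrightarrow>
     (\<lambda>\<tau>. katu_kernel \<rho> \<alpha> \<eta> x \<tau> * f \<tau>) integrable_on {0..x}"

text \<open>katugampola rho alpha beta eta k f x is \<rho>J^{\<alpha>,\<beta>}_{\<eta>,k} f(x).\<close>
definition katugampola ::
  "real \<Rightarrow> real \<Rightarrow> real \<Rightarrow> real \<Rightarrow> real \<Rightarrow> (real \<Rightarrow> real) \<Rightarrow> real \<Rightarrow> real" where
  "katugampola \<rho> \<alpha> \<beta> \<eta> k f x =
     \<rho> powr (1 - \<beta>) * x powr k / Gamma \<alpha> *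
     integral {0..x} (\<lambda>\<tau>. katu_kernel \<rho> \<alpha> \<eta> x \<tau> * f \<tau>)"

end

theory Submission
  imports Defs
begin

text \<open>Each operator is a nonnegative multiple of an integral against a nonnegative kernel, hence
  monotone. Each of the four inequalities is then \<open>(p - q) * (r - s) \<ge> 0\<close> for a pair \<open>q \<le> p\<close>
  of values of one operator and a pair \<open>s \<le> r\<close> of values of the other.\<close>

text \<open>No range condition on \<open>\<tau>\<close> is needed: \<open>powr\<close> is nonnegative for every base.\<close>
lemma katu_kernel_nonneg: "0 \<le> katu_kernel \<rho> \<alpha> \<eta> x \<tau>"
  by (simp add: katu_kernel_def)

lemma katugampola_mono:
  fixes f g :: "real \<Rightarrow> real"
  assumes "\<alpha> > 0"
    and "katu_integrable \<rho> \<alpha> \<eta> f x" "katu_integrable \<rho> \<alpha> \<eta> g x"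
    and "\<And>t. t \<in> {0..x} \<Longrightarrow> f t \<le> g t"
  shows "katugampola \<rho> \<alpha> \<beta> \<eta> k f x \<le> katugampola \<rho> \<alpha> \<beta> \<eta> k g x"
proof -
  have factor_nonneg: "0 \<le> \<rho> powr (1 - \<beta>) * x powr k / Gamma \<alpha>"
    using \<open>\<alpha> > 0\<close> by (simp add: Gamma_real_pos less_imp_le)
  have "integral {0..x} (\<lambda>\<tau>. katu_kernel \<rho> \<alpha> \<eta> x \<tau> * f \<tau>)
        \<le> integral {0..x} (\<lambda>\<tau>. katu_kernel \<rho> \<alpha> \<eta> x \<tau> * g \<tau>)"
    using assms(2-4)
    by (intro integral_le) (auto simp: katu_integrable_def katu_kernel_nonneg mult_left_mono)
  then show ?thesis
    unfolding katugampola_def using factor_nonneg by (rule mult_left_mono)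
qed

lemma mult_diff_rearrange_le:
  fixes p q r s :: "'a::linordered_ring"
  assumes "q \<le> p" "s \<le> r"
  shows "p * s + q * r \<le> p * r + q * s"
proof -
  have "0 \<le> (p - q) * (r - s)"
    using assms by simp
  then show ?thesis
    by (simp add: algebra_simps)
qed

theorem theorem4:
  fixes v u z1 z2 \<gamma>1 \<gamma>2 :: "real \<Rightarrow> real"
    and x \<alpha> \<delta> \<rho> \<beta> lam \<eta> k :: real
  assumes int_fun: "\<forall>f \<in> {v, u, z1, z2, \<gamma>1, \<gamma>2}. f integrable_on {0..}"
    and bv: "\<forall>t \<ge> 0. z1 t \<le> v t \<and> v t \<le> z2 t"
    and bu: "\<forall>t \<ge> 0. \<gamma>1 t \<le> u t \<and> u t \<le> \<gamma>2 t"
    and pos: "x > 0" "\<alpha> > 0" "\<delta> > 0" "\<rho> > 0"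
    and exA: "\<forall>f \<in> {v, u, z1, z2, \<gamma>1, \<gamma>2}. katu_integrable \<rho> \<alpha> \<eta> f x"
    and exD: "\<forall>f \<in> {v, u, z1, z2, \<gamma>1, \<gamma>2}. katu_integrable \<rho> \<delta> \<eta> f x"
  defines "A \<equiv> \<lambda>f. katugampola \<rho> \<alpha> \<beta> \<eta> k f x"
    and "D \<equiv> \<lambda>f. katugampola \<rho> \<delta> lam \<eta> k f x"
  shows "(D u * A z2 + D \<gamma>1 * A v \<ge> D \<gamma>1 * A z2 + D u * A v) \<and>
    (D z1 * A u + A \<gamma>2 * D v \<ge> D z1 * A \<gamma>2 + D v * A u) \<and>
    (A z2 * D \<gamma>2 + A v * D u \<ge> A z2 * D u + D \<gamma>2 * A v) \<and>
    (A z1 * D \<gamma>1 + A v * D u \<ge> A z1 * D u + D \<gamma>1 * A v)"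
proof -
  have A: "A z1 \<le> A v" "A v \<le> A z2" "A \<gamma>1 \<le> A u" "A u \<le> A \<gamma>2"
    unfolding A_def using pos(2) exA bv bu by (auto intro!: katugampola_mono)
  have D: "D z1 \<le> D v" "D v \<le> D z2" "D \<gamma>1 \<le> D u" "D u \<le> D \<gamma>2"
    unfolding D_def using pos(3) exD bv bu by (auto intro!: katugampola_mono)
  show ?thesis
    using mult_diff_rearrange_le[OF D(3) A(2)] mult_diff_rearrange_le[OF D(1) A(4)]
      mult_diff_rearrange_le[OF A(2) D(4)] mult_diff_rearrange_le[OF A(1) D(3)]
    by (simp add: algebra_simps)
qed

end
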